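(* Let $f\colon Y\to X$ be a generic map between path connected spaces, let $\dagger\in Y$ and write $*=f(\dagger)$. Then $f_*\colon\pi_1(Y,\dagger)\to\pi_1(X,* )$ is a split epimorphism. Consequently, the biset $B=B(f,\dagger,* )$ of $f$ is right-principal and left-invertible, namely $B^\vee\otimes_{\pi_1(Y,\dagger)}B\cong\pi_1(X,* )$ as $\pi_1(X,* )$-$\pi_1(X,* )$-bisets (the latter with actions by left and right multiplication).
   Context: A continuous map $f\colon Y\to X$ is generic if there exists a continuous map $g\colon X\to Y$ such that $f\circ g$ is isotopic to the identity of $X$. The biset $B(f,\dagger,* )$ is the set of homotopy classes rel endpoints of paths in $X$ from $f(\dagger)$ to $*$, a $\pi_1(Y,\dagger)$-$\pi_1(X,* )$-biset via $[\lambda]\cdot[\gamma]=[f\circ\lambda\#\gamma]$ and $[\gamma]\cdot[\mu]=[\gamma\#\mu]$. A biset is right-principal if the right action is simply transitive. The contragredient $B^\vee$ of an $H$-$G$-biset is the $G$-$H$-biset with the same set and actions $g\cdot\check b\cdot h=(h^{-1}bg^{-1})\check{}$; $\otimes_H$ denotes the product $B\times C/(bh,c)=(b,hc)$. *)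

theory Defs
  imports "HOL-Analysis.Analysis" "HOL-Algebra.Group"
begin

text \<open>Concatenation of paths (first p, then q); same formula as joinpaths, but for
  arbitrary (abstract) topological spaces.\<close>
definition pconcat :: "(real \<Rightarrow> 'a) \<Rightarrow> (real \<Rightarrow> 'a) \<Rightarrow> real \<Rightarrow> 'a" where
  "pconcat p q = (\<lambda>t. if t \<le> 1/2 then p (2 * t) else q (2 * t - 1))"

definition paths_between :: "'a topology \<Rightarrow> 'a \<Rightarrow> 'a \<Rightarrow> (real \<Rightarrow> 'a) set" where
  "paths_between X a b = {p. pathin X p \<and> p 0 = a \<and> p 1 = b}"

definition homotopic_paths_in :: "'a topology \<Rightarrow> (real \<Rightarrow> 'a) \<Rightarrow> (real \<Rightarrow> 'a) \<Rightarrow> bool" where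
  "homotopic_paths_in X p q =
     homotopic_with (\<lambda>h. h 0 = p 0 \<and> h 1 = p 1) (top_of_set {0..1}) X p q"

definition path_class :: "'a topology \<Rightarrow> (real \<Rightarrow> 'a) \<Rightarrow> (real \<Rightarrow> 'a) set" where
  "path_class X p = {q. homotopic_paths_in X p q}"

definition class_mult :: "'a topology \<Rightarrow> (real \<Rightarrow> 'a) set \<Rightarrow> (real \<Rightarrow> 'a) set \<Rightarrow> (real \<Rightarrow> 'a) set" where
  "class_mult X A B = \<Union>{path_class X (pconcat p q) | p q. p \<in> A \<and> q \<in> B}"

definition fundamental_group :: "'a topology \<Rightarrow> 'a \<Rightarrow> ((real \<Rightarrow> 'a) set) monoid" where
  "fundamental_group X a =
     \<lparr>carrier = path_class X ` paths_between X a a,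
      monoid.mult = class_mult X,
      one = path_class X (\<lambda>t. a)\<rparr>"

definition induced_map :: "'a topology \<Rightarrow> ('b \<Rightarrow> 'a) \<Rightarrow> (real \<Rightarrow> 'b) set \<Rightarrow> (real \<Rightarrow> 'a) set" where
  "induced_map X f A = \<Union>{path_class X (f \<circ> p) | p. p \<in> A}"

text \<open>Generic maps: f : Y \<rightarrow> X continuous, and there is a continuous g : X \<rightarrow> Y
  with f \<circ> g isotopic (homotopic through homeomorphisms) to the identity of X.\<close>
definition generic_map :: "'b topology \<Rightarrow> 'a topology \<Rightarrow> ('b \<Rightarrow> 'a) \<Rightarrow> bool" where
  "generic_map Y X f \<longleftrightarrow> continuous_map Y X f \<and>
     (\<exists>g. continuous_map X Y g \<and>
          homotopic_with (\<lambda>h. homeomorphic_map X X h) X X (f \<circ> g) id)"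

text \<open>A biset given by a set S, a left action l of H and a right action r of G.\<close>

definition map_biset_set :: "'a topology \<Rightarrow> ('b \<Rightarrow> 'a) \<Rightarrow> 'b \<Rightarrow> 'a \<Rightarrow> (real \<Rightarrow> 'a) set set" where
  "map_biset_set X f dag star = path_class X ` paths_between X (f dag) star"

definition map_biset_left :: "'a topology \<Rightarrow> ('b \<Rightarrow> 'a) \<Rightarrow> (real \<Rightarrow> 'b) set \<Rightarrow> (real \<Rightarrow> 'a) set \<Rightarrow> (real \<Rightarrow> 'a) set" where
  "map_biset_left X f L C = \<Union>{path_class X (pconcat (f \<circ> p) q) | p q. p \<in> L \<and> q \<in> C}"

definition map_biset_right :: "'a topology \<Rightarrow> (real \<Rightarrow> 'a) set \<Rightarrow> (real \<Rightarrow> 'a) set \<Rightarrow> (real \<Rightarrow> 'a) set" where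
  "map_biset_right X C M = \<Union>{path_class X (pconcat q m) | q m. q \<in> C \<and> m \<in> M}"

definition right_principal :: "('g, 'm) monoid_scheme \<Rightarrow> 's set \<Rightarrow> ('s \<Rightarrow> 'g \<Rightarrow> 's) \<Rightarrow> bool" where
  "right_principal G S r \<longleftrightarrow> (\<forall>s\<in>S. \<forall>s'\<in>S. \<exists>!g. g \<in> carrier G \<and> r s g = s')"

definition contra_left :: "('g, 'm) monoid_scheme \<Rightarrow> ('s \<Rightarrow> 'g \<Rightarrow> 's) \<Rightarrow> 'g \<Rightarrow> 's \<Rightarrow> 's" where
  "contra_left G r g b = r b (inv\<^bsub>G\<^esub> g)"

definition contra_right :: "('h, 'n) monoid_scheme \<Rightarrow> ('h \<Rightarrow> 's \<Rightarrow> 's) \<Rightarrow> 's \<Rightarrow> 'h \<Rightarrow> 's" where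
  "contra_right H l b h = l (inv\<^bsub>H\<^esub> h) b"

definition tensor_rel :: "('h, 'n) monoid_scheme \<Rightarrow> 's set \<Rightarrow> ('s \<Rightarrow> 'h \<Rightarrow> 's) \<Rightarrow>
    't set \<Rightarrow> ('h \<Rightarrow> 't \<Rightarrow> 't) \<Rightarrow> (('s \<times> 't) \<times> ('s \<times> 't)) set" where
  "tensor_rel H S r1 T l2 =
     ({((r1 b h, c), (b, l2 h c)) | b c h. b \<in> S \<and> c \<in> T \<and> h \<in> carrier H} \<union>
      {((r1 b h, c), (b, l2 h c)) | b c h. b \<in> S \<and> c \<in> T \<and> h \<in> carrier H}\<inverse>)\<^sup>*"

definition tensor_set :: "('h, 'n) monoid_scheme \<Rightarrow> 's set \<Rightarrow> ('s \<Rightarrow> 'h \<Rightarrow> 's) \<Rightarrow>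
    't set \<Rightarrow> ('h \<Rightarrow> 't \<Rightarrow> 't) \<Rightarrow> ('s \<times> 't) set set" where
  "tensor_set H S r1 T l2 = (S \<times> T) // tensor_rel H S r1 T l2"

definition tensor_left :: "('h, 'n) monoid_scheme \<Rightarrow> 's set \<Rightarrow> ('s \<Rightarrow> 'h \<Rightarrow> 's) \<Rightarrow>
    't set \<Rightarrow> ('h \<Rightarrow> 't \<Rightarrow> 't) \<Rightarrow> ('g \<Rightarrow> 's \<Rightarrow> 's) \<Rightarrow> 'g \<Rightarrow> ('s \<times> 't) set \<Rightarrow> ('s \<times> 't) set" where
  "tensor_left H S r1 T l2 l1 g E =
     \<Union>{tensor_rel H S r1 T l2 `` {(l1 g b, c)} | b c. (b, c) \<in> E}"

definition tensor_right :: "('h, 'n) monoid_scheme \<Rightarrow> 's set \<Rightarrow> ('s \<Rightarrow> 'h \<Rightarrow> 's) \<Rightarrow>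
    't set \<Rightarrow> ('h \<Rightarrow> 't \<Rightarrow> 't) \<Rightarrow> ('t \<Rightarrow> 'k \<Rightarrow> 't) \<Rightarrow> ('s \<times> 't) set \<Rightarrow> 'k \<Rightarrow> ('s \<times> 't) set" where
  "tensor_right H S r1 T l2 r2 E k =
     \<Union>{tensor_rel H S r1 T l2 `` {(b, r2 c k)} | b c. (b, c) \<in> E}"

definition biset_iso :: "('g, 'm) monoid_scheme \<Rightarrow> ('k, 'n) monoid_scheme \<Rightarrow>
    's set \<Rightarrow> ('g \<Rightarrow> 's \<Rightarrow> 's) \<Rightarrow> ('s \<Rightarrow> 'k \<Rightarrow> 's) \<Rightarrow>
    't set \<Rightarrow> ('g \<Rightarrow> 't \<Rightarrow> 't) \<Rightarrow> ('t \<Rightarrow> 'k \<Rightarrow> 't) \<Rightarrow> ('s \<Rightarrow> 't) \<Rightarrow> bool" where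
  "biset_iso G K S l r S' l' r' \<phi> \<longleftrightarrow> bij_betw \<phi> S S' \<and>
     (\<forall>g\<in>carrier G. \<forall>s\<in>S. \<phi> (l g s) = l' g (\<phi> s)) \<and>
     (\<forall>k\<in>carrier K. \<forall>s\<in>S. \<phi> (r s k) = r' (\<phi> s) k)"

end

theory Submission
  imports Defs
begin

text \<open>Choose a homotopy \<open>H\<close> from \<open>f \<circ> g\<close> to the identity and let \<open>\<gamma>\<close> be the track of the
  basepoint \<open>a = f \<dagger>\<close> under it. Dragging a loop \<open>c\<close> at \<open>a\<close> along \<open>H\<close> shows
  \<open>(f \<circ> g \<circ> c) \<gamma> \<simeq> \<gamma> c\<close>, so \<open>f\<^sub>* \<circ> g\<^sub>*\<close>, corrected by a change of basepoint in \<open>Y\<close>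
  along a path from \<open>\<dagger>\<close> to \<open>g a\<close>, is an inner automorphism of \<open>\<pi>\<^sub>1(X,a)\<close>; undoing that
  automorphism gives a section of \<open>f\<^sub>*\<close>. Since the biset of \<open>f\<close> is then \<open>\<pi>\<^sub>1(X,a)\<close> with
  its right multiplication and the left action \<open>h \<cdot> c = f\<^sub>*(h) c\<close>, it is right-principal,
  and \<open>[b, c] \<mapsto> b\<inverse> c\<close> identifies \<open>B\<^sup>\<or> \<otimes> B\<close> with \<open>\<pi>\<^sub>1(X,a)\<close>: it is well defined on the
  tensor product, and the surjectivity of \<open>f\<^sub>*\<close> makes each of its fibres a single class.\<close>

section \<open>Homotopy of paths in a topological space\<close>

definition preverse :: "(real \<Rightarrow> 'a) \<Rightarrow> real \<Rightarrow> 'a" where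
  "preverse p = (\<lambda>t. p (1 - t))"

lemma pconcat_endpoints [simp]: "pconcat p q 0 = p 0" "pconcat p q 1 = q 1"
  by (auto simp: pconcat_def)

lemma preverse_endpoints [simp]: "preverse p 0 = p 1" "preverse p 1 = p 0"
  by (auto simp: preverse_def)

lemma comp_pconcat: "f \<circ> pconcat p q = pconcat (f \<circ> p) (f \<circ> q)"
  by (auto simp: pconcat_def fun_eq_iff)

lemma comp_preverse: "f \<circ> preverse p = preverse (f \<circ> p)"
  by (auto simp: preverse_def fun_eq_iff)

lemma pathin_pconcat:
  assumes "pathin X p" "pathin X q" "p 1 = q 0"
  shows "pathin X (pconcat p q)"
  unfolding pathin_def pconcat_def
proof (rule continuous_map_cases_le)
  let ?I = "subtopology euclideanreal {0..1::real}"
  show "continuous_map ?I euclideanreal (\<lambda>x. x)"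
    by (simp add: continuous_map_from_subtopology)
  show "continuous_map ?I euclideanreal (\<lambda>x. 1/2)" by simp
  have "continuous_map (subtopology ?I {x \<in> topspace ?I. x \<le> 1/2}) ?I (\<lambda>t. 2*t)"
    by (intro continuous_map_into_subtopology continuous_map_from_subtopology continuous_intros) auto
  then show "continuous_map (subtopology ?I {x \<in> topspace ?I. x \<le> 1/2}) X (\<lambda>t. p (2*t))"
    using assms(1) unfolding pathin_def by (rule continuous_map_compose[unfolded o_def])
  have "continuous_map (subtopology ?I {x \<in> topspace ?I. 1/2 \<le> x}) ?I (\<lambda>t. 2*t-1)"
    by (intro continuous_map_into_subtopology continuous_map_from_subtopology continuous_intros) auto
  then show "continuous_map (subtopology ?I {x \<in> topspace ?I. 1/2 \<le> x}) X (\<lambda>t. q (2*t-1))"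
    using assms(2) unfolding pathin_def by (rule continuous_map_compose[unfolded o_def])
  show "p (2*x) = q (2*x-1)" if "x = 1/2" for x
    using assms by (simp add: that)
qed

lemma pathin_preverse:
  assumes "pathin X p"
  shows "pathin X (preverse p)"
proof -
  have "continuous_map (top_of_set {0..1}) (top_of_set {0..1::real}) (\<lambda>t. 1 - t)"
    by (intro continuous_map_into_subtopology continuous_map_from_subtopology continuous_intros) auto
  then show ?thesis
    using assms unfolding pathin_def preverse_def by (rule continuous_map_compose[unfolded o_def])
qed

lemma homotopic_paths_in_imp_pathin:
  assumes "homotopic_paths_in X p q"
  shows "pathin X p" "pathin X q" "q 0 = p 0" "q 1 = p 1"
  using homotopic_with_imp_continuous_maps[OF assms[unfolded homotopic_paths_in_def]]
    homotopic_with_imp_property[OF assms[unfolded homotopic_paths_in_def]]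
  by (simp_all add: pathin_def)

lemma homotopic_paths_in_refl: "pathin X p \<Longrightarrow> homotopic_paths_in X p p"
  by (simp add: homotopic_paths_in_def pathin_def)

lemma homotopic_paths_in_sym:
  assumes "homotopic_paths_in X p q"
  shows "homotopic_paths_in X q p"
proof -
  have "q 0 = p 0" "q 1 = p 1"
    using homotopic_paths_in_imp_pathin[OF assms] by auto
  with assms show ?thesis
    unfolding homotopic_paths_in_def by (simp add: homotopic_with_sym)
qed

lemma homotopic_paths_in_trans:
  assumes "homotopic_paths_in X p q" "homotopic_paths_in X q r"
  shows "homotopic_paths_in X p r"
proof -
  have "q 0 = p 0" "q 1 = p 1"
    using homotopic_paths_in_imp_pathin[OF assms(1)] by auto
  with assms show ?thesis
    unfolding homotopic_paths_in_def using homotopic_with_trans by fastforce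
qed

lemma homotopic_paths_in_eq:
  assumes "pathin X p" "\<And>t. t \<in> {0..1} \<Longrightarrow> p t = q t"
  shows "homotopic_paths_in X p q"
  unfolding homotopic_paths_in_def
  by (rule homotopic_with_equal) (use assms in \<open>auto simp: pathin_def\<close>)

lemma homotopic_paths_in_continuous_image:
  assumes "homotopic_paths_in X p q" "continuous_map X Z f"
  shows "homotopic_paths_in Z (f \<circ> p) (f \<circ> q)"
  using homotopic_with_compose_continuous_map_left[OF assms[unfolded homotopic_paths_in_def]]
  unfolding homotopic_paths_in_def by auto

lemma homotopic_paths_in_convex_image:
  fixes \<alpha> \<beta> :: "real \<Rightarrow> 'v::real_normed_vector"
  assumes "convex S" "continuous_map (top_of_set S) X K" "path \<alpha>" "path \<beta>"
    "\<alpha> ` {0..1} \<subseteq> S" "\<beta> ` {0..1} \<subseteq> S" "\<alpha> 0 = \<beta> 0" "\<alpha> 1 = \<beta> 1"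
  shows "homotopic_paths_in X (K \<circ> \<alpha>) (K \<circ> \<beta>)"
proof -
  have "homotopic_paths S \<alpha> \<beta>"
  proof (rule homotopic_paths_linear)
    show "closed_segment (\<alpha> t) (\<beta> t) \<subseteq> S" if "t \<in> {0..1}" for t
      using assms that by (intro closed_segment_subset) auto
  qed (use assms in \<open>auto simp: pathstart_def pathfinish_def\<close>)
  then have "homotopic_with (\<lambda>r. r 0 = \<alpha> 0 \<and> r 1 = \<alpha> 1) (top_of_set {0..1}) (top_of_set S) \<alpha> \<beta>"
    by (simp add: homotopic_paths_def pathstart_def pathfinish_def)
  from homotopic_with_compose_continuous_map_left[OF this assms(2)]
  show ?thesis unfolding homotopic_paths_in_def by auto
qed

lemma homotopic_paths_in_reparametrize:
  assumes "pathin X k" "continuous_on {0..1} \<phi>" "continuous_on {0..1} \<psi>"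
    "\<phi> ` {0..1} \<subseteq> {0..1}" "\<psi> ` {0..1} \<subseteq> {0..1}" "\<phi> 0 = \<psi> 0" "\<phi> 1 = \<psi> 1"
    "\<And>s. s \<in> {0..1} \<Longrightarrow> p s = k (\<phi> s)" "\<And>s. s \<in> {0..1} \<Longrightarrow> q s = k (\<psi> s)"
  shows "homotopic_paths_in X p q"
proof -
  have h: "homotopic_paths_in X (k \<circ> \<phi>) (k \<circ> \<psi>)"
    by (rule homotopic_paths_in_convex_image[where S="{0..1}"])
       (use assms in \<open>auto simp: pathin_def path_def\<close>)
  have "homotopic_paths_in X p (k \<circ> \<phi>)"
    by (rule homotopic_paths_in_sym, rule homotopic_paths_in_eq)
       (use homotopic_paths_in_imp_pathin[OF h] assms in auto)
  moreover have "homotopic_paths_in X (k \<circ> \<psi>) q"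
    by (rule homotopic_paths_in_eq) (use homotopic_paths_in_imp_pathin[OF h] assms in auto)
  ultimately show ?thesis
    using h homotopic_paths_in_trans by blast
qed

lemma homotopic_paths_in_pconcat:
  assumes "homotopic_paths_in X p p'" "homotopic_paths_in X q q'" "p 1 = q 0"
  shows "homotopic_paths_in X (pconcat p q) (pconcat p' q')"
proof -
  let ?I = "top_of_set {0..1::real}"
  let ?I2 = "prod_topology ?I ?I"
  obtain k1 where k1: "continuous_map ?I2 X k1" "\<forall>x. k1 (0, x) = p x" "\<forall>x. k1 (1, x) = p' x"
     "\<forall>t\<in>{0..1}. k1 (t, 0) = p 0 \<and> k1 (t, 1) = p 1"
    using assms(1) unfolding homotopic_paths_in_def homotopic_with_def by auto
  obtain k2 where k2: "continuous_map ?I2 X k2" "\<forall>x. k2 (0, x) = q x" "\<forall>x. k2 (1, x) = q' x"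
     "\<forall>t\<in>{0..1}. k2 (t, 0) = q 0 \<and> k2 (t, 1) = q 1"
    using assms(2) unfolding homotopic_paths_in_def homotopic_with_def by auto
  define k where "k \<equiv> \<lambda>y. if snd y \<le> 1/2
                             then (k1 \<circ> (\<lambda>x. (fst x, 2 * snd x))) y
                             else (k2 \<circ> (\<lambda>x. (fst x, 2 * snd x - 1))) y"
  have snd: "continuous_map ?I2 euclideanreal snd"
    using continuous_map_snd continuous_map_in_subtopology by blast
  have fst: "continuous_map ?I2 euclideanreal fst"
    using continuous_map_fst continuous_map_in_subtopology by blast
  show ?thesis
    unfolding homotopic_paths_in_def homotopic_with_def
  proof (intro exI conjI)
    show "continuous_map ?I2 X k"
      unfolding k_def
    proof (rule continuous_map_cases_le)
      show "continuous_map (subtopology ?I2 {y \<in> topspace ?I2. snd y \<le> 1/2}) X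
               (k1 \<circ> (\<lambda>x. (fst x, 2 * snd x)))"
        apply (intro fst snd continuous_map_compose [OF _ k1(1)] continuous_intros
            continuous_map_into_subtopology continuous_map_from_subtopology | simp)+
        by (force simp: prod_topology_subtopology)
      show "continuous_map (subtopology ?I2 {y \<in> topspace ?I2. 1/2 \<le> snd y}) X
               (k2 \<circ> (\<lambda>x. (fst x, 2 * snd x - 1)))"
        apply (intro fst snd continuous_map_compose [OF _ k2(1)] continuous_intros
            continuous_map_into_subtopology continuous_map_from_subtopology | simp)+
        by (force simp: prod_topology_subtopology)
      show "(k1 \<circ> (\<lambda>x. (fst x, 2 * snd x))) y = (k2 \<circ> (\<lambda>x. (fst x, 2 * snd x - 1))) y"
        if "y \<in> topspace ?I2" and "snd y = 1/2" for y
      proof -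
        have "fst y \<in> {0..1}"
          using that(1) by auto
        then show ?thesis
          using k1(4) k2(4) assms(3) by (simp add: that(2))
      qed
    qed (use snd in auto)
    show "\<forall>x. k (0, x) = pconcat p q x" "\<forall>x. k (1, x) = pconcat p' q' x"
      by (simp_all add: k1 k2 k_def pconcat_def)
    show "\<forall>t\<in>{0..1}. (\<lambda>x. k (t, x)) 0 = pconcat p q 0 \<and> (\<lambda>x. k (t, x)) 1 = pconcat p q 1"
      using k1(4) k2(4) by (simp add: k_def pconcat_def)
  qed
qed

lemma homotopic_paths_in_assoc:
  assumes "pathin X p" "pathin X q" "pathin X r" "p 1 = q 0" "q 1 = r 0"
  shows "homotopic_paths_in X (pconcat (pconcat p q) r) (pconcat p (pconcat q r))"
proof (rule homotopic_paths_in_reparametrize[where k="pconcat (pconcat p q) r" and \<phi>="\<lambda>s. s"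
      and \<psi>="\<lambda>s. max (s/2) (max (s-1/4) (2* s-1))"])
  show "pathin X (pconcat (pconcat p q) r)"
    using assms by (simp add: pathin_pconcat)
  show "continuous_on {0..1} (\<lambda>s::real. max (s/2) (max (s-1/4) (2* s-1)))"
    by (intro continuous_intros) auto
  show "(\<lambda>s::real. max (s/2) (max (s-1/4) (2* s-1))) ` {0..1} \<subseteq> {0..1}"
    by (auto simp: max_def)
  fix s :: real
  consider "s < 1/2" | "s = 1/2" | "1/2 < s \<and> s \<le> 3/4" | "3/4 < s" by linarith
  then show "pconcat p (pconcat q r) s = pconcat (pconcat p q) r (max (s/2) (max (s-1/4) (2 * s-1)))"
  proof cases
    case 2
    show ?thesis
      unfolding 2 by (simp add: pconcat_def max_def)
  next
    case 3
    then have "max (s/2) (max (s-1/4) (2 * s-1)) = s - 1/4" by (simp add: max_def)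
    with 3 assms(5) show ?thesis by (auto simp: pconcat_def algebra_simps)
  next
    case 4
    then have "max (s/2) (max (s-1/4) (2 * s-1)) = 2 * s-1" by (simp add: max_def)
    with 4 show ?thesis by (simp add: pconcat_def algebra_simps)
  qed (auto simp: pconcat_def max_def)
qed auto

lemma homotopic_paths_in_lid:
  assumes "pathin X p"
  shows "homotopic_paths_in X (pconcat (\<lambda>_. p 0) p) p"
proof (rule homotopic_paths_in_reparametrize[where k=p and \<phi>="\<lambda>s. max 0 (2 * s-1)" and \<psi>="\<lambda>s. s"])
  show "continuous_on {0..1} (\<lambda>s::real. max 0 (2 * s-1))"
    by (intro continuous_intros)
  show "pconcat (\<lambda>_. p 0) p s = p (max 0 (2 * s-1))" for s
    by (cases s "1/2::real" rule: linorder_cases) (auto simp: pconcat_def max_def simp del: eq_divide_eq_numeral1)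
qed (use assms in \<open>auto simp: max_def\<close>)

lemma homotopic_paths_in_linv:
  assumes "pathin X p"
  shows "homotopic_paths_in X (pconcat (preverse p) p) (\<lambda>_. p 1)"
proof (rule homotopic_paths_in_reparametrize[where k=p and \<phi>="\<lambda>s. \<bar>2 * s-1\<bar>" and \<psi>="\<lambda>s. 1"])
  show "continuous_on {0..1} (\<lambda>s::real. \<bar>2 * s-1\<bar>)"
    by (intro continuous_intros)
  show "pconcat (preverse p) p s = p \<bar>2 * s-1\<bar>" for s
    by (cases s "1/2::real" rule: linorder_cases) (auto simp: pconcat_def preverse_def simp del: eq_divide_eq_numeral1)
qed (use assms in \<open>auto simp: abs_if\<close>)

lemma homotopic_paths_in_cancel:
  assumes "pathin X p" "pathin X d" "pathin X q" "p 1 = d 1" "q 0 = d 1"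
  shows "homotopic_paths_in X (pconcat (pconcat p (preverse d)) (pconcat d q)) (pconcat p q)"
proof -
  have d': "pathin X (preverse d)"
    using assms by (simp add: pathin_preverse)
  have "homotopic_paths_in X (pconcat (preverse d) (pconcat d q)) (pconcat (pconcat (preverse d) d) q)"
    using assms d' by (intro homotopic_paths_in_sym[OF homotopic_paths_in_assoc]) auto
  moreover have "homotopic_paths_in X (pconcat (pconcat (preverse d) d) q) (pconcat (\<lambda>_. d 1) q)"
    using assms d' by (intro homotopic_paths_in_pconcat homotopic_paths_in_linv homotopic_paths_in_refl) auto
  moreover have "homotopic_paths_in X (pconcat (\<lambda>_. d 1) q) q"
    using assms homotopic_paths_in_lid[of X q] by simp
  ultimately have "homotopic_paths_in X (pconcat (preverse d) (pconcat d q)) q"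
    using homotopic_paths_in_trans by blast
  then have "homotopic_paths_in X (pconcat p (pconcat (preverse d) (pconcat d q))) (pconcat p q)"
    using assms by (intro homotopic_paths_in_pconcat homotopic_paths_in_refl) auto
  moreover have "homotopic_paths_in X (pconcat (pconcat p (preverse d)) (pconcat d q))
                   (pconcat p (pconcat (preverse d) (pconcat d q)))"
    using assms d' by (intro homotopic_paths_in_assoc) (auto simp: pathin_pconcat)
  ultimately show ?thesis
    using homotopic_paths_in_trans by blast
qed

section \<open>Path classes and the fundamental group\<close>

lemma path_class_eqI:
  assumes "homotopic_paths_in X p q"
  shows "path_class X p = path_class X q"
  using assms homotopic_paths_in_sym homotopic_paths_in_trans unfolding path_class_def by blast

lemma path_in_path_class: "pathin X p \<Longrightarrow> p \<in> path_class X p"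
  by (simp add: path_class_def homotopic_paths_in_refl)

lemma class_mult_path_class:
  assumes "pathin X p" "pathin X q" "p 1 = q 0"
  shows "class_mult X (path_class X p) (path_class X q) = path_class X (pconcat p q)"
proof
  show "class_mult X (path_class X p) (path_class X q) \<subseteq> path_class X (pconcat p q)"
  proof
    fix r assume "r \<in> class_mult X (path_class X p) (path_class X q)"
    then obtain p' q' where "homotopic_paths_in X p p'" "homotopic_paths_in X q q'"
      "r \<in> path_class X (pconcat p' q')"
      unfolding class_mult_def path_class_def by auto
    then show "r \<in> path_class X (pconcat p q)"
      using homotopic_paths_in_pconcat[of X p p' q q'] assms homotopic_paths_in_trans
      unfolding path_class_def by blast
  qed
  show "path_class X (pconcat p q) \<subseteq> class_mult X (path_class X p) (path_class X q)"
    unfolding class_mult_def using path_in_path_class assms by blast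
qed

lemma induced_map_path_class:
  assumes "continuous_map Y X f" "pathin Y p"
  shows "induced_map X f (path_class Y p) = path_class X (f \<circ> p)"
proof
  show "induced_map X f (path_class Y p) \<subseteq> path_class X (f \<circ> p)"
  proof
    fix r assume "r \<in> induced_map X f (path_class Y p)"
    then obtain p' where "homotopic_paths_in Y p p'" "r \<in> path_class X (f \<circ> p')"
      unfolding induced_map_def path_class_def by auto
    then show "r \<in> path_class X (f \<circ> p)"
      using homotopic_paths_in_continuous_image[OF _ assms(1)] homotopic_paths_in_trans
      unfolding path_class_def by blast
  qed
  show "path_class X (f \<circ> p) \<subseteq> induced_map X f (path_class Y p)"
    unfolding induced_map_def using path_in_path_class assms by blast
qed

lemma carrier_fundamental_group:
  "carrier (fundamental_group X a) = path_class X ` paths_between X a a"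
  by (simp add: fundamental_group_def)

lemma mult_fundamental_group [simp]: "monoid.mult (fundamental_group X a) = class_mult X"
  by (simp add: fundamental_group_def)

lemma one_fundamental_group [simp]: "one (fundamental_group X a) = path_class X (\<lambda>t. a)"
  by (simp add: fundamental_group_def)

lemma fundamental_group_elem_cases:
  assumes "x \<in> carrier (fundamental_group X a)"
  obtains p where "pathin X p" "p 0 = a" "p 1 = a" "x = path_class X p"
  using assms by (auto simp: carrier_fundamental_group paths_between_def)

lemma path_class_in_fundamental_group:
  "pathin X p \<Longrightarrow> p 0 = a \<Longrightarrow> p 1 = a \<Longrightarrow> path_class X p \<in> carrier (fundamental_group X a)"
  by (auto simp: carrier_fundamental_group paths_between_def)

lemma group_fundamental_group:
  assumes "a \<in> topspace X"
  shows "group (fundamental_group X a)"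
proof (rule groupI)
  fix x y assume "x \<in> carrier (fundamental_group X a)" "y \<in> carrier (fundamental_group X a)"
  then obtain p q where "pathin X p" "p 0 = a" "p 1 = a" "x = path_class X p"
    "pathin X q" "q 0 = a" "q 1 = a" "y = path_class X q"
    by (metis fundamental_group_elem_cases)
  then show "x \<otimes>\<^bsub>fundamental_group X a\<^esub> y \<in> carrier (fundamental_group X a)"
    by (simp add: class_mult_path_class path_class_in_fundamental_group pathin_pconcat)
next
  show "\<one>\<^bsub>fundamental_group X a\<^esub> \<in> carrier (fundamental_group X a)"
    using assms by (simp add: path_class_in_fundamental_group)
next
  fix x y z
  assume "x \<in> carrier (fundamental_group X a)" "y \<in> carrier (fundamental_group X a)"
    "z \<in> carrier (fundamental_group X a)"
  then obtain p q r where pqr: "pathin X p" "p 0 = a" "p 1 = a" "x = path_class X p"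
    "pathin X q" "q 0 = a" "q 1 = a" "y = path_class X q"
    "pathin X r" "r 0 = a" "r 1 = a" "z = path_class X r"
    by (metis fundamental_group_elem_cases)
  have "path_class X (pconcat (pconcat p q) r) = path_class X (pconcat p (pconcat q r))"
    using pqr by (intro path_class_eqI homotopic_paths_in_assoc) auto
  with pqr show "x \<otimes>\<^bsub>fundamental_group X a\<^esub> y \<otimes>\<^bsub>fundamental_group X a\<^esub> z =
           x \<otimes>\<^bsub>fundamental_group X a\<^esub> (y \<otimes>\<^bsub>fundamental_group X a\<^esub> z)"
    by (simp add: class_mult_path_class pathin_pconcat)
next
  fix x assume "x \<in> carrier (fundamental_group X a)"
  then obtain p where p: "pathin X p" "p 0 = a" "p 1 = a" "x = path_class X p"
    by (metis fundamental_group_elem_cases)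
  show "\<one>\<^bsub>fundamental_group X a\<^esub> \<otimes>\<^bsub>fundamental_group X a\<^esub> x = x"
    using p assms path_class_eqI[OF homotopic_paths_in_lid[of X p]]
    by (simp add: class_mult_path_class)
  have "path_class X (preverse p) \<otimes>\<^bsub>fundamental_group X a\<^esub> x = \<one>\<^bsub>fundamental_group X a\<^esub>"
    using p path_class_eqI[OF homotopic_paths_in_linv[of X p]]
    by (simp add: class_mult_path_class pathin_preverse)
  moreover have "path_class X (preverse p) \<in> carrier (fundamental_group X a)"
    using p by (simp add: path_class_in_fundamental_group pathin_preverse)
  ultimately show "\<exists>y\<in>carrier (fundamental_group X a).
      y \<otimes>\<^bsub>fundamental_group X a\<^esub> x = \<one>\<^bsub>fundamental_group X a\<^esub>"
    by blast
qed

lemma induced_map_hom: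
  assumes "continuous_map Y X f" "b \<in> topspace Y"
  shows "induced_map X f \<in> hom (fundamental_group Y b) (fundamental_group X (f b))"
proof (rule homI)
  fix x assume "x \<in> carrier (fundamental_group Y b)"
  then obtain p where "pathin Y p" "p 0 = b" "p 1 = b" "x = path_class Y p"
    by (metis fundamental_group_elem_cases)
  then show "induced_map X f x \<in> carrier (fundamental_group X (f b))"
    using assms by (simp add: induced_map_path_class path_class_in_fundamental_group pathin_compose)
next
  fix x y assume "x \<in> carrier (fundamental_group Y b)" "y \<in> carrier (fundamental_group Y b)"
  then obtain p q where "pathin Y p" "p 0 = b" "p 1 = b" "x = path_class Y p"
    "pathin Y q" "q 0 = b" "q 1 = b" "y = path_class Y q"
    by (metis fundamental_group_elem_cases)
  then show "induced_map X f (x \<otimes>\<^bsub>fundamental_group Y b\<^esub> y) =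
      induced_map X f x \<otimes>\<^bsub>fundamental_group X (f b)\<^esub> induced_map X f y"
    using assms by (simp add: class_mult_path_class induced_map_path_class pathin_pconcat
        pathin_compose comp_pconcat)
qed

section \<open>Change of basepoint and free homotopies\<close>

definition basepoint_change :: "'a topology \<Rightarrow> (real \<Rightarrow> 'a) \<Rightarrow> (real \<Rightarrow> 'a) set \<Rightarrow> (real \<Rightarrow> 'a) set"
  where "basepoint_change X d x =
           class_mult X (class_mult X (path_class X d) x) (path_class X (preverse d))"

lemma basepoint_change_path_class:
  assumes "pathin X d" "pathin X c" "c 0 = d 1" "c 1 = d 1"
  shows "basepoint_change X d (path_class X c) = path_class X (pconcat (pconcat d c) (preverse d))"
  using assms by (simp add: basepoint_change_def class_mult_path_class pathin_pconcat pathin_preverse)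

lemma basepoint_change_hom:
  assumes d: "pathin X d"
  shows "basepoint_change X d \<in> hom (fundamental_group X (d 1)) (fundamental_group X (d 0))"
proof (rule homI)
  have d': "pathin X (preverse d)"
    using d by (rule pathin_preverse)
  fix x assume "x \<in> carrier (fundamental_group X (d 1))"
  then obtain c where "pathin X c" "c 0 = d 1" "c 1 = d 1" "x = path_class X c"
    by (metis fundamental_group_elem_cases)
  then show "basepoint_change X d x \<in> carrier (fundamental_group X (d 0))"
    using d d' by (simp add: basepoint_change_path_class path_class_in_fundamental_group pathin_pconcat)
next
  have d': "pathin X (preverse d)"
    using d by (rule pathin_preverse)
  fix x y assume "x \<in> carrier (fundamental_group X (d 1))" "y \<in> carrier (fundamental_group X (d 1))"
  then obtain c c' where c: "pathin X c" "c 0 = d 1" "c 1 = d 1" "x = path_class X c"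
    and c': "pathin X c'" "c' 0 = d 1" "c' 1 = d 1" "y = path_class X c'"
    by (metis fundamental_group_elem_cases)
  have "basepoint_change X d x \<otimes>\<^bsub>fundamental_group X (d 0)\<^esub> basepoint_change X d y =
      path_class X (pconcat (pconcat (pconcat d c) (preverse d)) (pconcat (pconcat d c') (preverse d)))"
    using c c' d d' by (simp add: basepoint_change_path_class class_mult_path_class pathin_pconcat)
  also have "\<dots> = path_class X (pconcat (pconcat (pconcat d c) (preverse d)) (pconcat d (pconcat c' (preverse d))))"
    using c c' d d'
    by (intro path_class_eqI homotopic_paths_in_pconcat homotopic_paths_in_refl homotopic_paths_in_assoc)
       (auto simp: pathin_pconcat)
  also have "\<dots> = path_class X (pconcat (pconcat d c) (pconcat c' (preverse d)))"
    using c c' d d' by (intro path_class_eqI homotopic_paths_in_cancel) (auto simp: pathin_pconcat)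
  also have "\<dots> = path_class X (pconcat (pconcat (pconcat d c) c') (preverse d))"
    using c c' d d' by (intro path_class_eqI homotopic_paths_in_sym[OF homotopic_paths_in_assoc])
       (auto simp: pathin_pconcat)
  also have "\<dots> = path_class X (pconcat (pconcat d (pconcat c c')) (preverse d))"
    using c c' d d'
    by (intro path_class_eqI homotopic_paths_in_pconcat homotopic_paths_in_refl homotopic_paths_in_assoc)
       (auto simp: pathin_pconcat)
  also have "\<dots> = basepoint_change X d (x \<otimes>\<^bsub>fundamental_group X (d 1)\<^esub> y)"
    using c c' d by (simp add: basepoint_change_path_class class_mult_path_class pathin_pconcat)
  finally show "basepoint_change X d (x \<otimes>\<^bsub>fundamental_group X (d 1)\<^esub> y) =
      basepoint_change X d x \<otimes>\<^bsub>fundamental_group X (d 0)\<^esub> basepoint_change X d y"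
    by (rule sym)
qed

lemma pathin_homotopy_track:
  assumes "continuous_map (prod_topology (top_of_set {0..1::real}) X) Z H" "a \<in> topspace X"
  shows "pathin Z (\<lambda>t. H (t, a))"
proof -
  have "continuous_map (top_of_set {0..1}) (prod_topology (top_of_set {0..1::real}) X) (\<lambda>t. (t, a))"
    unfolding continuous_map_paired using assms(2) by simp
  then show ?thesis
    unfolding pathin_def by (rule continuous_map_compose[OF _ assms(1), unfolded o_def])
qed

text \<open>Both sides are the image of the boundary of the square \<open>(s, t) \<mapsto> H (s, c t)\<close>,
  traversed along the two pairs of adjacent sides.\<close>

lemma homotopic_paths_in_homotopy_square:
  assumes H: "continuous_map (prod_topology (top_of_set {0..1::real}) X) X H"
    and H0: "\<And>x. H (0, x) = k x" and H1: "\<And>x. H (1, x) = x"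
    and c: "pathin X c"
  shows "homotopic_paths_in X (pconcat (k \<circ> c) (\<lambda>t. H (t, c 1))) (pconcat (\<lambda>t. H (t, c 0)) c)"
proof -
  let ?S = "{0..1::real} \<times> {0..1::real}"
  let ?K = "\<lambda>z. H (fst z, c (snd z))"
  have "top_of_set ?S = prod_topology (top_of_set {0..1}) (top_of_set {0..1})"
    by (simp flip: subtopology_Times)
  moreover have "continuous_map (prod_topology (top_of_set {0..1}) (top_of_set {0..1}))
          (prod_topology (top_of_set {0..1::real}) X) (\<lambda>z. (fst z, c (snd z)))"
    unfolding continuous_map_paired
    by (intro conjI continuous_map_fst
        continuous_map_compose[OF continuous_map_snd c[unfolded pathin_def], unfolded o_def])
  ultimately have K: "continuous_map (top_of_set ?S) X ?K"
    using continuous_map_compose[OF _ H] by (simp add: o_def)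
  let ?\<alpha> = "\<lambda>s::real. (max 0 (2 * s - 1), min 1 (2 * s))"
  let ?\<beta> = "\<lambda>s::real. (min 1 (2 * s), max 0 (2 * s - 1))"
  have h: "homotopic_paths_in X (?K \<circ> ?\<alpha>) (?K \<circ> ?\<beta>)"
  proof (rule homotopic_paths_in_convex_image[OF _ K])
    show "convex ?S"
      by (intro convex_Times convex_real_interval)
    show "path ?\<alpha>" "path ?\<beta>"
      unfolding path_def by (intro continuous_intros)+
    show "?\<alpha> ` {0..1} \<subseteq> ?S" "?\<beta> ` {0..1} \<subseteq> ?S"
      by (auto simp: max_def min_def)
  qed auto
  have "?K \<circ> ?\<alpha> = pconcat (k \<circ> c) (\<lambda>t. H (t, c 1))"
  proof
    show "(?K \<circ> ?\<alpha>) s = pconcat (k \<circ> c) (\<lambda>t. H (t, c 1)) s" for s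
      by (cases s "1/2::real" rule: linorder_cases)
         (auto simp: pconcat_def H0 max_def min_def simp del: eq_divide_eq_numeral1)
  qed
  moreover have "?K \<circ> ?\<beta> = pconcat (\<lambda>t. H (t, c 0)) c"
  proof
    show "(?K \<circ> ?\<beta>) s = pconcat (\<lambda>t. H (t, c 0)) c s" for s
      by (cases s "1/2::real" rule: linorder_cases)
         (auto simp: pconcat_def H1 max_def min_def simp del: eq_divide_eq_numeral1)
  qed
  ultimately show ?thesis
    using h by simp
qed

section \<open>A section of the induced map\<close>

lemma (in group) section_from_twisted_section:
  assumes F: "F \<in> hom H G" and S: "S \<in> hom G H" and u: "u \<in> carrier G"
    and twist: "\<And>y. y \<in> carrier G \<Longrightarrow> F (S y) \<otimes> u = u \<otimes> y"
  shows "\<exists>s\<in>hom G H. \<forall>x\<in>carrier G. F (s x) = x"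
proof -
  let ?inner = "\<lambda>x. inv u \<otimes> x \<otimes> u"
  have cancel: "u \<otimes> (inv u \<otimes> z) = z" if "z \<in> carrier G" for z
    using that u by (simp add: m_assoc[symmetric])
  have "?inner \<in> hom G G"
    by (rule homI) (use u cancel in \<open>simp_all add: m_assoc\<close>)
  then have "S \<circ> ?inner \<in> hom G H"
    using S by (rule Group.hom_compose)
  moreover have "F ((S \<circ> ?inner) x) = x" if x: "x \<in> carrier G" for x
  proof -
    have "F (S (?inner x)) \<otimes> u = x \<otimes> u"
      using twist[of "?inner x"] x u cancel by (simp add: m_assoc)
    moreover have "F (S (?inner x)) \<in> carrier G"
      using F S x u by (simp add: hom_in_carrier)
    ultimately show ?thesis
      using x u by simp
  qed
  ultimately show ?thesis
    by blast
qed

lemma induced_map_basepoint_change_conj: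
  assumes f: "continuous_map Y X f" and g: "continuous_map X Y g"
    and H: "continuous_map (prod_topology (top_of_set {0..1::real}) X) X H"
    and H0: "\<And>x. H (0, x) = f (g x)" and H1: "\<And>x. H (1, x) = x"
    and \<delta>: "pathin Y \<delta>" "f (\<delta> 0) = a" "\<delta> 1 = g a"
    and y: "y \<in> carrier (fundamental_group X a)"
  defines "u \<equiv> path_class X (pconcat (f \<circ> \<delta>) (\<lambda>t. H (t, a)))"
  shows "induced_map X f (basepoint_change Y \<delta> (induced_map Y g y)) \<otimes>\<^bsub>fundamental_group X a\<^esub> u =
         u \<otimes>\<^bsub>fundamental_group X a\<^esub> y"
proof -
  obtain c where c: "pathin X c" "c 0 = a" "c 1 = a" "y = path_class X c"
    using y by (metis fundamental_group_elem_cases)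
  define \<gamma> where "\<gamma> = (\<lambda>t. H (t, a))"
  have \<gamma>: "pathin X \<gamma>" "\<gamma> 0 = f (g a)" "\<gamma> 1 = a"
    using pathin_homotopy_track[OF H path_start_in_topspace[OF c(1)]] c(2) by (simp_all add: \<gamma>_def H0 H1)
  define D where "D = f \<circ> \<delta>"
  define E where "E = f \<circ> (g \<circ> c)"
  have D: "pathin X D" "pathin X (preverse D)" "D 1 = f (g a)"
    using \<delta> f by (simp_all add: D_def pathin_compose pathin_preverse)
  have E: "pathin X E" "E 0 = f (g a)" "E 1 = f (g a)"
    using pathin_compose[OF pathin_compose[OF c(1) g] f] c by (simp_all add: E_def)
  have "induced_map X f (basepoint_change Y \<delta> (induced_map Y g y)) =
        path_class X (pconcat (pconcat D E) (preverse D))"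
    using c \<delta> f g
    by (simp add: D_def E_def induced_map_path_class basepoint_change_path_class pathin_compose
        pathin_pconcat pathin_preverse comp_pconcat comp_preverse)
  then have "induced_map X f (basepoint_change Y \<delta> (induced_map Y g y)) \<otimes>\<^bsub>fundamental_group X a\<^esub> u =
        path_class X (pconcat (pconcat (pconcat D E) (preverse D)) (pconcat D \<gamma>))"
    using D E \<gamma> by (simp add: u_def \<gamma>_def[symmetric] D_def[symmetric] class_mult_path_class pathin_pconcat)
  also have "\<dots> = path_class X (pconcat (pconcat D E) \<gamma>)"
    using D E \<gamma> by (intro path_class_eqI homotopic_paths_in_cancel) (auto simp: pathin_pconcat)
  also have "\<dots> = path_class X (pconcat D (pconcat E \<gamma>))"
    using D E \<gamma> by (intro path_class_eqI homotopic_paths_in_assoc) auto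
  also have "\<dots> = path_class X (pconcat D (pconcat \<gamma> c))"
  proof (rule path_class_eqI, rule homotopic_paths_in_pconcat[OF homotopic_paths_in_refl])
    show "homotopic_paths_in X (pconcat E \<gamma>) (pconcat \<gamma> c)"
      using homotopic_paths_in_homotopy_square[OF H H0 H1 c(1)] c
      by (simp add: E_def \<gamma>_def comp_def)
  qed (use D E in auto)
  also have "\<dots> = path_class X (pconcat (pconcat D \<gamma>) c)"
    using D \<gamma> c by (intro path_class_eqI homotopic_paths_in_sym[OF homotopic_paths_in_assoc]) auto
  also have "\<dots> = u \<otimes>\<^bsub>fundamental_group X a\<^esub> y"
    using D \<gamma> c by (simp add: u_def \<gamma>_def[symmetric] D_def[symmetric] class_mult_path_class pathin_pconcat)
  finally show ?thesis .
qed

lemma induced_map_has_section: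
  assumes f: "continuous_map Y X f" and g: "continuous_map X Y g"
    and fg: "homotopic_with P X X (f \<circ> g) id"
    and Y: "path_connected_space Y" and b: "b \<in> topspace Y"
  shows "\<exists>s\<in>hom (fundamental_group X (f b)) (fundamental_group Y b).
           \<forall>x\<in>carrier (fundamental_group X (f b)). induced_map X f (s x) = x"
proof -
  define a where "a = f b"
  have a: "a \<in> topspace X"
    using f b by (auto simp: a_def continuous_map_def)
  obtain H where H: "continuous_map (prod_topology (top_of_set {0..1::real}) X) X H"
    and H0: "\<And>x. H (0, x) = f (g x)" and H1: "\<And>x. H (1, x) = x"
    using fg unfolding homotopic_with_def by (auto simp: o_def)
  obtain \<delta> where \<delta>: "pathin Y \<delta>" "\<delta> 0 = b" "\<delta> 1 = g a"
    using Y b g a unfolding path_connected_space_def continuous_map_def by blast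
  interpret \<pi>\<^sub>1X: group "fundamental_group X a"
    using a by (rule group_fundamental_group)
  have F: "induced_map X f \<in> hom (fundamental_group Y b) (fundamental_group X a)"
    unfolding a_def using f b by (rule induced_map_hom)
  have S: "basepoint_change Y \<delta> \<circ> induced_map Y g \<in> hom (fundamental_group X a) (fundamental_group Y b)"
    using hom_compose[OF induced_map_hom[OF g a] basepoint_change_hom[OF \<delta>(1), unfolded \<delta>(2,3)]] .
  have u: "path_class X (pconcat (f \<circ> \<delta>) (\<lambda>t. H (t, a))) \<in> carrier (fundamental_group X a)"
    using \<delta> f pathin_homotopy_track[OF H a]
    by (intro path_class_in_fundamental_group) (auto simp: a_def H0 H1 pathin_compose pathin_pconcat)
  show ?thesis
    unfolding a_def[symmetric]
    by (rule \<pi>\<^sub>1X.section_from_twisted_section[OF F S u])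
       (use induced_map_basepoint_change_conj[OF f g H H0 H1 \<delta>(1) _ \<delta>(3)] \<delta>(2) a_def in auto)
qed

lemma map_biset_set_eq: "map_biset_set X f b (f b) = carrier (fundamental_group X (f b))"
  by (simp add: map_biset_set_def carrier_fundamental_group)

lemma map_biset_right_eq: "map_biset_right X = monoid.mult (fundamental_group X a)"
  by (intro ext) (simp only: mult_fundamental_group map_biset_right_def class_mult_def)

lemma map_biset_left_path_class:
  assumes f: "continuous_map Y X f" and p: "pathin Y p" and q: "pathin X q" and "f (p 1) = q 0"
  shows "map_biset_left X f (path_class Y p) (path_class X q) = path_class X (pconcat (f \<circ> p) q)"
proof
  show "map_biset_left X f (path_class Y p) (path_class X q) \<subseteq> path_class X (pconcat (f \<circ> p) q)"
  proof
    fix r assume "r \<in> map_biset_left X f (path_class Y p) (path_class X q)"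
    then obtain p' q' where p': "homotopic_paths_in Y p p'" and q': "homotopic_paths_in X q q'"
      and r: "r \<in> path_class X (pconcat (f \<circ> p') q')"
      unfolding map_biset_left_def path_class_def mem_Collect_eq by blast
    have "homotopic_paths_in X (f \<circ> p) (f \<circ> p')"
      using p' f by (rule homotopic_paths_in_continuous_image)
    then have "homotopic_paths_in X (pconcat (f \<circ> p) q) (pconcat (f \<circ> p') q')"
      using homotopic_paths_in_pconcat[OF _ q'] assms(4) by simp
    then show "r \<in> path_class X (pconcat (f \<circ> p) q)"
      using r homotopic_paths_in_trans unfolding path_class_def by blast
  qed
  show "path_class X (pconcat (f \<circ> p) q) \<subseteq> map_biset_left X f (path_class Y p) (path_class X q)"
  proof
    fix r assume "r \<in> path_class X (pconcat (f \<circ> p) q)"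
    moreover have "p \<in> path_class Y p" "q \<in> path_class X q"
      using p q by (simp_all add: path_in_path_class)
    ultimately show "r \<in> map_biset_left X f (path_class Y p) (path_class X q)"
      unfolding map_biset_left_def by blast
  qed
qed

lemma map_biset_left_eq:
  assumes f: "continuous_map Y X f"
    and "h \<in> carrier (fundamental_group Y b)" "c \<in> carrier (fundamental_group X (f b))"
  shows "map_biset_left X f h c = induced_map X f h \<otimes>\<^bsub>fundamental_group X (f b)\<^esub> c"
proof -
  obtain p where "pathin Y p" "p 0 = b" "p 1 = b" "h = path_class Y p"
    using assms(2) by (metis fundamental_group_elem_cases)
  moreover obtain q where "pathin X q" "q 0 = f b" "q 1 = f b" "c = path_class X q"
    using assms(3) by (metis fundamental_group_elem_cases)
  ultimately show ?thesis
    using f by (simp add: map_biset_left_path_class induced_map_path_class class_mult_path_class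
        pathin_compose)
qed

lemma (in group) right_principal_mult: "right_principal G (carrier G) (\<otimes>)"
  unfolding right_principal_def
proof (intro ballI)
  fix x y assume "x \<in> carrier G" "y \<in> carrier G"
  then show "\<exists>!g. g \<in> carrier G \<and> x \<otimes> g = y"
    by (metis inv_closed inv_solve_left m_closed)
qed

section \<open>The tensor square of a biset given by an epimorphism\<close>

definition ldiv_fibre :: "('g, 'm) monoid_scheme \<Rightarrow> 'g \<Rightarrow> ('g \<times> 'g) set" where
  "ldiv_fibre G v = {(b, c). b \<in> carrier G \<and> c \<in> carrier G \<and> inv\<^bsub>G\<^esub> b \<otimes>\<^bsub>G\<^esub> c = v}"

lemma Union_family_constant:
  assumes "\<And>b c. (b, c) \<in> A \<Longrightarrow> S b c = B" "A \<noteq> {}"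
  shows "\<Union>{S b c | b c. (b, c) \<in> A} = B"
  using assms by auto

context
  fixes G :: "('g, 'm) monoid_scheme" and H :: "('h, 'n) monoid_scheme"
    and F :: "'h \<Rightarrow> 'g" and l :: "'h \<Rightarrow> 'g \<Rightarrow> 'g"
  assumes G: "group G" and H: "group H" and F: "F \<in> hom H G"
    and F_surj: "F ` carrier H = carrier G"
    and l: "\<And>h c. h \<in> carrier H \<Longrightarrow> c \<in> carrier G \<Longrightarrow> l h c = F h \<otimes>\<^bsub>G\<^esub> c"
begin

interpretation G: group G by (rule G)
interpretation F: group_hom H G F by (intro group_hom.intro group_hom_axioms.intro G H F)

lemma ldiv_fibre_one: "v \<in> carrier G \<Longrightarrow> (\<one>\<^bsub>G\<^esub>, v) \<in> ldiv_fibre G v"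
  by (simp add: ldiv_fibre_def)

lemma tensor_generator_ldiv:
  assumes "b \<in> carrier G" "c \<in> carrier G" "h \<in> carrier H"
  shows "contra_right H l b h \<in> carrier G" "l h c \<in> carrier G"
    "inv\<^bsub>G\<^esub> (contra_right H l b h) \<otimes>\<^bsub>G\<^esub> c = inv\<^bsub>G\<^esub> b \<otimes>\<^bsub>G\<^esub> l h c"
  using assms by (simp_all add: contra_right_def l G.inv_mult_group G.m_assoc)

lemma tensor_rel_in_ldiv_fibre:
  assumes "(x, y) \<in> tensor_rel H (carrier G) (contra_right H l) (carrier G) l" "x \<in> ldiv_fibre G v"
  shows "y \<in> ldiv_fibre G v"
  using assms(1) unfolding tensor_rel_def
proof (induction rule: rtrancl_induct)
  case base
  then show ?case using assms(2) .
next
  case (step y z)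
  then obtain b c h where bch: "b \<in> carrier G" "c \<in> carrier G" "h \<in> carrier H"
    and "y = (contra_right H l b h, c) \<and> z = (b, l h c) \<or> z = (contra_right H l b h, c) \<and> y = (b, l h c)"
    by blast
  then show ?case
    using tensor_generator_ldiv[OF bch] step.IH by (auto simp: ldiv_fibre_def)
qed

lemma tensor_rel_ldiv_fibre_one:
  assumes "(b, c) \<in> ldiv_fibre G v"
  shows "((b, c), (\<one>\<^bsub>G\<^esub>, v)) \<in> tensor_rel H (carrier G) (contra_right H l) (carrier G) l"
proof -
  have b: "b \<in> carrier G" and c: "c \<in> carrier G" and v: "inv\<^bsub>G\<^esub> b \<otimes>\<^bsub>G\<^esub> c = v"
    using assms by (auto simp: ldiv_fibre_def)
  obtain h where h: "h \<in> carrier H" "F h = inv\<^bsub>G\<^esub> b"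
    using F_surj b by (metis G.inv_closed imageE)
  have "contra_right H l \<one>\<^bsub>G\<^esub> h = b" "l h c = v"
    using h b c v by (simp_all add: contra_right_def l)
  then show ?thesis
    unfolding tensor_rel_def
    by (intro r_into_rtrancl UnI1) (use h(1) c in force)
qed

lemma tensor_rel_class:
  assumes x: "x \<in> ldiv_fibre G v"
  shows "tensor_rel H (carrier G) (contra_right H l) (carrier G) l `` {x} = ldiv_fibre G v"
proof
  show "tensor_rel H (carrier G) (contra_right H l) (carrier G) l `` {x} \<subseteq> ldiv_fibre G v"
    using tensor_rel_in_ldiv_fibre x by blast
  show "ldiv_fibre G v \<subseteq> tensor_rel H (carrier G) (contra_right H l) (carrier G) l `` {x}"
  proof
    fix z assume "z \<in> ldiv_fibre G v"
    then have "(z, (\<one>\<^bsub>G\<^esub>, v)) \<in> tensor_rel H (carrier G) (contra_right H l) (carrier G) l"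
      using tensor_rel_ldiv_fibre_one by (cases z) simp
    moreover have "sym (tensor_rel H (carrier G) (contra_right H l) (carrier G) l)"
      unfolding tensor_rel_def by (intro sym_rtrancl sym_Un_converse)
    ultimately have "((\<one>\<^bsub>G\<^esub>, v), z) \<in> tensor_rel H (carrier G) (contra_right H l) (carrier G) l"
      by (rule symD[rotated])
    moreover have "(x, (\<one>\<^bsub>G\<^esub>, v)) \<in> tensor_rel H (carrier G) (contra_right H l) (carrier G) l"
      using tensor_rel_ldiv_fibre_one x by (cases x) simp
    ultimately show "z \<in> tensor_rel H (carrier G) (contra_right H l) (carrier G) l `` {x}"
      unfolding tensor_rel_def by (meson Image_singleton_iff rtrancl_trans)
  qed
qed

lemma tensor_set_eq:
  "tensor_set H (carrier G) (contra_right H l) (carrier G) l = ldiv_fibre G ` carrier G"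
proof
  show "tensor_set H (carrier G) (contra_right H l) (carrier G) l \<subseteq> ldiv_fibre G ` carrier G"
  proof
    fix Q assume "Q \<in> tensor_set H (carrier G) (contra_right H l) (carrier G) l"
    then obtain b c where bc: "b \<in> carrier G" "c \<in> carrier G"
      and Q: "Q = tensor_rel H (carrier G) (contra_right H l) (carrier G) l `` {(b, c)}"
      unfolding tensor_set_def quotient_def by blast
    have "(b, c) \<in> ldiv_fibre G (inv\<^bsub>G\<^esub> b \<otimes>\<^bsub>G\<^esub> c)"
      using bc by (simp add: ldiv_fibre_def)
    with bc show "Q \<in> ldiv_fibre G ` carrier G"
      unfolding Q by (simp add: tensor_rel_class)
  qed
  show "ldiv_fibre G ` carrier G \<subseteq> tensor_set H (carrier G) (contra_right H l) (carrier G) l"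
  proof
    fix Q assume "Q \<in> ldiv_fibre G ` carrier G"
    then obtain v where v: "v \<in> carrier G" "Q = ldiv_fibre G v"
      by blast
    then have "Q = tensor_rel H (carrier G) (contra_right H l) (carrier G) l `` {(\<one>\<^bsub>G\<^esub>, v)}"
      using tensor_rel_class[OF ldiv_fibre_one] by simp
    with v(1) show "Q \<in> tensor_set H (carrier G) (contra_right H l) (carrier G) l"
      unfolding tensor_set_def quotient_def by auto
  qed
qed

lemma tensor_left_ldiv_fibre:
  assumes "g \<in> carrier G" "v \<in> carrier G"
  shows "tensor_left H (carrier G) (contra_right H l) (carrier G) l (contra_left G (\<otimes>\<^bsub>G\<^esub>)) g
           (ldiv_fibre G v) = ldiv_fibre G (g \<otimes>\<^bsub>G\<^esub> v)"
  unfolding tensor_left_def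
proof (rule Union_family_constant)
  fix b c assume "(b, c) \<in> ldiv_fibre G v"
  then have "(contra_left G (\<otimes>\<^bsub>G\<^esub>) g b, c) \<in> ldiv_fibre G (g \<otimes>\<^bsub>G\<^esub> v)"
    using assms by (auto simp: ldiv_fibre_def contra_left_def G.inv_mult_group G.m_assoc)
  then show "tensor_rel H (carrier G) (contra_right H l) (carrier G) l ``
      {(contra_left G (\<otimes>\<^bsub>G\<^esub>) g b, c)} = ldiv_fibre G (g \<otimes>\<^bsub>G\<^esub> v)"
    by (rule tensor_rel_class)
qed (use assms ldiv_fibre_one in blast)

lemma tensor_right_ldiv_fibre:
  assumes "k \<in> carrier G" "v \<in> carrier G"
  shows "tensor_right H (carrier G) (contra_right H l) (carrier G) l (\<otimes>\<^bsub>G\<^esub>) (ldiv_fibre G v) k =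
           ldiv_fibre G (v \<otimes>\<^bsub>G\<^esub> k)"
  unfolding tensor_right_def
proof (rule Union_family_constant)
  fix b c assume "(b, c) \<in> ldiv_fibre G v"
  then have "(b, c \<otimes>\<^bsub>G\<^esub> k) \<in> ldiv_fibre G (v \<otimes>\<^bsub>G\<^esub> k)"
    using assms by (auto simp: ldiv_fibre_def G.m_assoc)
  then show "tensor_rel H (carrier G) (contra_right H l) (carrier G) l ``
      {(b, c \<otimes>\<^bsub>G\<^esub> k)} = ldiv_fibre G (v \<otimes>\<^bsub>G\<^esub> k)"
    by (rule tensor_rel_class)
qed (use assms ldiv_fibre_one in blast)

lemma tensor_contragredient_iso:
  "\<exists>\<phi>. biset_iso G G
     (tensor_set H (carrier G) (contra_right H l) (carrier G) l)
     (tensor_left H (carrier G) (contra_right H l) (carrier G) l (contra_left G (\<otimes>\<^bsub>G\<^esub>)))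
     (tensor_right H (carrier G) (contra_right H l) (carrier G) l (\<otimes>\<^bsub>G\<^esub>))
     (carrier G) (\<lambda>g x. g \<otimes>\<^bsub>G\<^esub> x) (\<lambda>x g. x \<otimes>\<^bsub>G\<^esub> g) \<phi>"
proof -
  have inj: "inj_on (ldiv_fibre G) (carrier G)"
  proof (rule inj_onI)
    fix v w assume "v \<in> carrier G" "ldiv_fibre G v = ldiv_fibre G w"
    then show "v = w"
      using ldiv_fibre_one[of v] by (simp add: ldiv_fibre_def)
  qed
  define \<phi> where "\<phi> = the_inv_into (carrier G) (ldiv_fibre G)"
  have \<phi>: "\<phi> (ldiv_fibre G v) = v" if "v \<in> carrier G" for v
    unfolding \<phi>_def using inj that by (rule the_inv_into_f_f)
  have "bij_betw \<phi> (ldiv_fibre G ` carrier G) (carrier G)"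
    unfolding \<phi>_def using inj by (intro bij_betw_the_inv_into inj_on_imp_bij_betw)
  then show ?thesis
    unfolding biset_iso_def tensor_set_eq
    by (intro exI[of _ \<phi>]) (auto simp: \<phi> tensor_left_ldiv_fibre tensor_right_ldiv_fibre)
qed

end

theorem mainTheorem20:
  fixes Y :: "'b topology" and X :: "'a topology" and f :: "'b \<Rightarrow> 'a" and dag :: 'b
  assumes "generic_map Y X f"
    and "path_connected_space Y" and "path_connected_space X"
    and "dag \<in> topspace Y"
  shows "(induced_map X f \<in> hom (fundamental_group Y dag) (fundamental_group X (f dag)) \<and>
         (\<exists>s\<in>hom (fundamental_group X (f dag)) (fundamental_group Y dag).
            \<forall>x\<in>carrier (fundamental_group X (f dag)). induced_map X f (s x) = x)) \<and>
         right_principal (fundamental_group X (f dag))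
           (map_biset_set X f dag (f dag)) (map_biset_right X) \<and>
         (\<exists>\<phi>. biset_iso (fundamental_group X (f dag)) (fundamental_group X (f dag))
           (tensor_set (fundamental_group Y dag) (map_biset_set X f dag (f dag))
              (contra_right (fundamental_group Y dag) (map_biset_left X f))
              (map_biset_set X f dag (f dag)) (map_biset_left X f))
           (tensor_left (fundamental_group Y dag) (map_biset_set X f dag (f dag))
              (contra_right (fundamental_group Y dag) (map_biset_left X f))
              (map_biset_set X f dag (f dag)) (map_biset_left X f)
              (contra_left (fundamental_group X (f dag)) (map_biset_right X)))
           (tensor_right (fundamental_group Y dag) (map_biset_set X f dag (f dag))
              (contra_right (fundamental_group Y dag) (map_biset_left X f))
              (map_biset_set X f dag (f dag)) (map_biset_left X f) (map_biset_right X))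
           (carrier (fundamental_group X (f dag)))
           (\<lambda>g x. g \<otimes>\<^bsub>fundamental_group X (f dag)\<^esub> x)
           (\<lambda>x g. x \<otimes>\<^bsub>fundamental_group X (f dag)\<^esub> g)
           \<phi>)"
proof -
  obtain g where f: "continuous_map Y X f" and g: "continuous_map X Y g"
    and fg: "homotopic_with (\<lambda>h. homeomorphic_map X X h) X X (f \<circ> g) id"
    using assms(1) unfolding generic_map_def by blast
  have "f dag \<in> topspace X"
    using f assms(4) by (auto simp: continuous_map_def)
  then have G: "group (fundamental_group X (f dag))"
    by (rule group_fundamental_group)
  have H: "group (fundamental_group Y dag)"
    using assms(4) by (rule group_fundamental_group)
  have F: "induced_map X f \<in> hom (fundamental_group Y dag) (fundamental_group X (f dag))"
    using f assms(4) by (rule induced_map_hom)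
  obtain s where s: "s \<in> hom (fundamental_group X (f dag)) (fundamental_group Y dag)"
    "\<forall>x\<in>carrier (fundamental_group X (f dag)). induced_map X f (s x) = x"
    using induced_map_has_section[OF f g fg assms(2,4)] by blast
  have "induced_map X f ` carrier (fundamental_group Y dag) = carrier (fundamental_group X (f dag))"
    using hom_carrier[OF F] s hom_in_carrier[OF s(1)] by (auto intro!: image_eqI)
  note tensor = tensor_contragredient_iso[OF G H F this map_biset_left_eq[OF f]]
  show ?thesis
    unfolding map_biset_set_eq map_biset_right_eq[of X "f dag"]
    using F s group.right_principal_mult[OF G] tensor by blast
qed

end
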